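(* Let $a,b\in\mathbb{C}$ with $(a,b)\neq(1,0)$ and $\alpha,\beta,\eta\in\mathbb{C}$ with $\alpha\neq0$. A nontrivial extension $0\to M_{\alpha,\beta}\to E\to\mathbb{C}c_\eta\to0$ of $\mathcal{W}(a,b)$-modules exists if and only if $\beta+\eta=0$ and $\alpha=1$. In this case $\dim\mathrm{Ext}(\mathbb{C}c_{-\beta},M_{1,\beta})=1$, and every nontrivial extension is equivalent to $E=\mathbb{C}[\partial]v\oplus\mathbb{C}c_\eta$ with $$L_\lambda c_\eta=kv,\qquad W_\lambda c_\eta=0,\qquad \partial c_\eta=\eta c_\eta+kv$$ for some nonzero $k\in\mathbb{C}$.
   Context: A conformal module over a Lie conformal algebra $\mathcal{R}$ is a $\mathbb{C}[\partial]$-module $V$ with $\mathbb{C}$-linear maps $\mathcal{R}\otimes V\to V[\lambda]$, $a\otimes v\mapsto a_\lambda v$, such that $(\partial a)_\lambda v=-\lambda a_\lambda v$, $a_\lambda(\partial v)=(\partial+\lambda)a_\lambda v$, and $a_\lambda(b_\mu v)-b_\mu(a_\lambda v)=[a_\lambda b]_{\lambda+\mu}v$. The Lie conformal algebra $\mathcal{W}(a,b)$ is the free $\mathbb{C}[\partial]$-module on $L,W$ with $[L_\lambda L]=(\partial+2\lambda)L$, $[L_\lambda W]=(\partial+a\lambda+b)W$, $[W_\lambda W]=0$. For $(a,b)\neq(1,0)$, $\alpha\neq0$, $M_{\alpha,\beta}=\mathbb{C}[\partial]v$ with $L_\lambda v=(\partial+\alpha\lambda+\beta)v$, $W_\lambda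 v=0$. $\mathbb{C}c_\eta$ is the one-dimensional module with $\partial c_\eta=\eta c_\eta$ and all $\lambda$-actions zero. An extension is an exact sequence of modules $0\to V\to E\to W\to 0$; equivalence means a module homomorphism between the middle terms compatible with the identities on $V$ and $W$; trivial means equivalent to the direct sum extension. $\mathrm{Ext}(W,V)$ denotes the vector space of equivalence classes of extensions of $W$ by $V$ (cocycles modulo coboundaries). *)

theory Defs
  imports "HOL-Computational_Algebra.Polynomial" "HOL-Library.Product_Plus"
begin

text \<open>A conformal module over W(a,b) on a carrier type: complex scalar multiplication,
  the action of the derivation d (the C[d]-module structure), and the lambda-actions
  of the two free generators L and W (lambda-action as a function of lambda).\<close>

record 'v cmod =
  scl  :: "complex \<Rightarrow> 'v \<Rightarrow> 'v"
  dd   :: "'v \<Rightarrow> 'v"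
  actL :: "complex \<Rightarrow> 'v \<Rightarrow> 'v"
  actW :: "complex \<Rightarrow> 'v \<Rightarrow> 'v"

definition lin :: "(complex \<Rightarrow> 'v::ab_group_add \<Rightarrow> 'v) \<Rightarrow> (complex \<Rightarrow> 'w::ab_group_add \<Rightarrow> 'w)
                   \<Rightarrow> ('v \<Rightarrow> 'w) \<Rightarrow> bool" where
  "lin s1 s2 f \<longleftrightarrow> (\<forall>x y. f (x + y) = f x + f y) \<and> (\<forall>c x. f (s1 c x) = s2 c (f x))"

definition is_polyfun :: "(complex \<Rightarrow> 'v::ab_group_add \<Rightarrow> 'v) \<Rightarrow> (complex \<Rightarrow> 'v) \<Rightarrow> bool" where
  "is_polyfun s f \<longleftrightarrow> (\<exists>n c. \<forall>l. f l = (\<Sum>i\<le>n. s (l ^ i) (c i)))"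

text \<open>Conformal module over W(a,b): [L_l L] = (d+2l)L, [L_l W] = (d+al+b)W, [W_l W] = 0,
  with (d x)_l v = -l x_l v used to evaluate the brackets at l+m.\<close>
definition is_Wmod :: "complex \<Rightarrow> complex \<Rightarrow> ('v::ab_group_add) cmod \<Rightarrow> bool" where
  "is_Wmod a b M \<longleftrightarrow>
     vector_space (scl M) \<and>
     lin (scl M) (scl M) (dd M) \<and>
     (\<forall>l. lin (scl M) (scl M) (actL M l)) \<and>
     (\<forall>l. lin (scl M) (scl M) (actW M l)) \<and>
     (\<forall>v. is_polyfun (scl M) (\<lambda>l. actL M l v)) \<and>
     (\<forall>v. is_polyfun (scl M) (\<lambda>l. actW M l v)) \<and>
     (\<forall>l v. actL M l (dd M v) = dd M (actL M l v) + scl M l (actL M l v)) \<and>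
     (\<forall>l v. actW M l (dd M v) = dd M (actW M l v) + scl M l (actW M l v)) \<and>
     (\<forall>l m v. actL M l (actL M m v) - actL M m (actL M l v)
               = scl M (l - m) (actL M (l + m) v)) \<and>
     (\<forall>l m v. actL M l (actW M m v) - actW M m (actL M l v)
               = scl M (- (l + m) + a * l + b) (actW M (l + m) v)) \<and>
     (\<forall>l m v. actW M l (actW M m v) - actW M m (actW M l v) = 0)"

definition is_hom :: "('v::ab_group_add) cmod \<Rightarrow> ('w::ab_group_add) cmod \<Rightarrow> ('v \<Rightarrow> 'w) \<Rightarrow> bool" where
  "is_hom M N f \<longleftrightarrow> lin (scl M) (scl N) f \<and>
     (\<forall>v. f (dd M v) = dd N (f v)) \<and>
     (\<forall>l v. f (actL M l v) = actL N l (f v)) \<and>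
     (\<forall>l v. f (actW M l v) = actW N l (f v))"

definition is_ext :: "complex \<Rightarrow> complex \<Rightarrow> ('v::ab_group_add) cmod \<Rightarrow> ('w::ab_group_add) cmod
     \<Rightarrow> ('e::ab_group_add) cmod \<Rightarrow> ('v \<Rightarrow> 'e) \<Rightarrow> ('e \<Rightarrow> 'w) \<Rightarrow> bool" where
  "is_ext a b V W E i p \<longleftrightarrow> is_Wmod a b V \<and> is_Wmod a b W \<and> is_Wmod a b E \<and>
     is_hom V E i \<and> is_hom E W p \<and> inj i \<and> surj p \<and> range i = {x. p x = 0}"

definition ext_equiv :: "('e::ab_group_add) cmod \<Rightarrow> ('v \<Rightarrow> 'e) \<Rightarrow> ('e \<Rightarrow> 'w)
     \<Rightarrow> ('f::ab_group_add) cmod \<Rightarrow> ('v \<Rightarrow> 'f) \<Rightarrow> ('f \<Rightarrow> 'w) \<Rightarrow> bool" where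
  "ext_equiv E i p E' i' p' \<longleftrightarrow> (\<exists>\<phi>. is_hom E E' \<phi> \<and> \<phi> \<circ> i = i' \<and> p' \<circ> \<phi> = p)"

definition dsum :: "('v::ab_group_add) cmod \<Rightarrow> ('w::ab_group_add) cmod \<Rightarrow> ('v \<times> 'w) cmod" where
  "dsum V W = \<lparr> scl = (\<lambda>c (x, y). (scl V c x, scl W c y)),
                dd = (\<lambda>(x, y). (dd V x, dd W y)),
                actL = (\<lambda>l (x, y). (actL V l x, actL W l y)),
                actW = (\<lambda>l (x, y). (actW V l x, actW W l y)) \<rparr>"

definition trivial_ext :: "('v::ab_group_add) cmod \<Rightarrow> ('w::ab_group_add) cmod
     \<Rightarrow> ('e::ab_group_add) cmod \<Rightarrow> ('v \<Rightarrow> 'e) \<Rightarrow> ('e \<Rightarrow> 'w) \<Rightarrow> bool" where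
  "trivial_ext V W E i p \<longleftrightarrow> ext_equiv E i p (dsum V W) (\<lambda>v. (v, 0)) snd"

definition nontrivial_ext :: "complex \<Rightarrow> complex \<Rightarrow> ('v::ab_group_add) cmod \<Rightarrow> ('w::ab_group_add) cmod
     \<Rightarrow> ('e::ab_group_add) cmod \<Rightarrow> ('v \<Rightarrow> 'e) \<Rightarrow> ('e \<Rightarrow> 'w) \<Rightarrow> bool" where
  "nontrivial_ext a b V W E i p \<longleftrightarrow> is_ext a b V W E i p \<and> \<not> trivial_ext V W E i p"

text \<open>M_{alpha,beta} = C[d]v, modelled as complex polynomials (p stands for p(d)v):
  L_l (p(d) v) = p(d+l) (d + alpha l + beta) v, W_l = 0.\<close>
definition Mact :: "complex \<Rightarrow> complex \<Rightarrow> complex \<Rightarrow> complex poly \<Rightarrow> complex poly" where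
  "Mact \<alpha> \<beta> l p = pcompose p [:l, 1:] * [:\<alpha> * l + \<beta>, 1:]"

definition Mab :: "complex \<Rightarrow> complex \<Rightarrow> complex poly cmod" where
  "Mab \<alpha> \<beta> = \<lparr> scl = smult, dd = (\<lambda>p. p * [:0, 1:]), actL = Mact \<alpha> \<beta>, actW = (\<lambda>l p. 0) \<rparr>"

text \<open>The one-dimensional module C c_eta (c_eta modelled as 1 :: complex).\<close>
definition Cc :: "complex \<Rightarrow> complex cmod" where
  "Cc \<eta> = \<lparr> scl = (*), dd = (\<lambda>z. \<eta> * z), actL = (\<lambda>l z. 0), actW = (\<lambda>l z. 0) \<rparr>"

text \<open>Extensions of C c_eta by M_{alpha,beta} on the vector space C[d]v (+) C c_eta given by
  cocycle data t = (f, g, h): d c = eta c + f(d) v, L_l c = g_l(d) v, W_l c = h_l(d) v.\<close>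
type_synonym cocyc = "complex poly \<times> (complex \<Rightarrow> complex poly) \<times> (complex \<Rightarrow> complex poly)"

definition Ecoc :: "complex \<Rightarrow> complex \<Rightarrow> complex \<Rightarrow> cocyc \<Rightarrow> (complex poly \<times> complex) cmod" where
  "Ecoc \<alpha> \<beta> \<eta> t = (case t of (f, g, h) \<Rightarrow>
     \<lparr> scl = (\<lambda>c (x, z). (smult c x, c * z)),
       dd = (\<lambda>(x, z). (x * [:0, 1:] + smult z f, \<eta> * z)),
       actL = (\<lambda>l (x, z). (Mact \<alpha> \<beta> l x + smult z (g l), 0)),
       actW = (\<lambda>l (x, z). (smult z (h l), 0)) \<rparr>)"

definition incl :: "complex poly \<Rightarrow> complex poly \<times> complex" where
  "incl x = (x, 0)"

text \<open>Ext(C c_eta, M_{alpha,beta}) = cocycles modulo coboundaries.\<close>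
definition cocycles :: "complex \<Rightarrow> complex \<Rightarrow> complex \<Rightarrow> complex \<Rightarrow> complex \<Rightarrow> cocyc set" where
  "cocycles a b \<alpha> \<beta> \<eta> = {t. is_ext a b (Mab \<alpha> \<beta>) (Cc \<eta>) (Ecoc \<alpha> \<beta> \<eta> t) incl snd}"

definition coboundaries :: "complex \<Rightarrow> complex \<Rightarrow> complex \<Rightarrow> complex \<Rightarrow> complex \<Rightarrow> cocyc set" where
  "coboundaries a b \<alpha> \<beta> \<eta> = {t \<in> cocycles a b \<alpha> \<beta> \<eta>.
      trivial_ext (Mab \<alpha> \<beta>) (Cc \<eta>) (Ecoc \<alpha> \<beta> \<eta> t) incl snd}"

definition cadd :: "cocyc \<Rightarrow> cocyc \<Rightarrow> cocyc" where
  "cadd t u = (case t of (f, g, h) \<Rightarrow> case u of (f', g', h') \<Rightarrow>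
                (f + f', (\<lambda>l. g l + g' l), (\<lambda>l. h l + h' l)))"

definition cscale :: "complex \<Rightarrow> cocyc \<Rightarrow> cocyc" where
  "cscale c t = (case t of (f, g, h) \<Rightarrow> (smult c f, (\<lambda>l. smult c (g l)), (\<lambda>l. smult c (h l))))"

definition csubspace :: "cocyc set \<Rightarrow> bool" where
  "csubspace S \<longleftrightarrow> (0, (\<lambda>l. 0), (\<lambda>l. 0)) \<in> S \<and> (\<forall>t\<in>S. \<forall>u\<in>S. cadd t u \<in> S) \<and>
                   (\<forall>c. \<forall>t\<in>S. cscale c t \<in> S)"

text \<open>dim (Z / B) = 1 for subspaces B \<subseteq> Z.\<close>
definition quot_dim_one :: "cocyc set \<Rightarrow> cocyc set \<Rightarrow> bool" where
  "quot_dim_one Z B \<longleftrightarrow> csubspace Z \<and> csubspace B \<and> B \<subseteq> Z \<and>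
     (\<exists>z\<in>Z. z \<notin> B \<and> (\<forall>x\<in>Z. \<exists>c. cadd x (cscale (- c) z) \<in> B))"

definition Ek :: "complex \<Rightarrow> complex \<Rightarrow> complex \<Rightarrow> complex \<Rightarrow> (complex poly \<times> complex) cmod" where
  "Ek \<alpha> \<beta> \<eta> k = Ecoc \<alpha> \<beta> \<eta> ([:k:], (\<lambda>l. [:k:]), (\<lambda>l. 0))"

end

theory Submission
  imports Defs
begin

text \<open>Fix a lift \<open>c\<close> of \<open>c\<^sub>\<eta>\<close> in \<open>E\<close>. Then \<open>E = \<complex>[\<partial>]v \<oplus> \<complex>c\<close>, and the module structure
  is encoded by polynomials with \<open>\<partial>c = \<eta>c + f(\<partial>)v\<close>, \<open>L\<^sub>\<lambda>c = g\<^sub>\<lambda>(\<partial>)v\<close>, \<open>W\<^sub>\<lambda>c = h\<^sub>\<lambda>(\<partial>)v\<close>.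
  The axiom \<open>x\<^sub>\<lambda>(\<partial>c) = (\<partial> + \<lambda>)x\<^sub>\<lambda>c\<close> gives \<open>h\<^sub>\<lambda> = 0\<close> and
  \<open>g\<^sub>\<lambda>(\<partial>)(\<partial> + \<lambda> - \<eta>) = f(\<partial> + \<lambda>)(\<partial> + \<alpha>\<lambda> + \<beta>)\<close>; evaluating at \<open>\<partial> = \<eta> - \<lambda>\<close> yields
  \<open>f(\<eta>)(\<alpha>\<lambda> + \<beta> + \<eta> - \<lambda>) = 0\<close> for all \<open>\<lambda>\<close>. A splitting changes \<open>f\<close> by a multiple of
  \<open>\<partial> - \<eta>\<close>, so the extension is trivial iff \<open>f(\<eta>) = 0\<close>; hence a nontrivial one forces
  \<open>\<beta> + \<eta> = 0\<close> and \<open>\<alpha> = 1\<close>. In that case \<open>g\<^sub>\<lambda>(\<partial>) = f(\<partial> + \<lambda>)\<close>, so the cocycles are the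
  shifts of arbitrary \<open>f\<close>, the coboundaries those with \<open>f(-\<beta>) = 0\<close>, and the class of an
  extension is determined by \<open>k = f(\<eta>)\<close>.\<close>

section \<open>The modules \<open>M\<^sub>\<alpha>\<^sub>,\<^sub>\<beta>\<close> and \<open>\<complex>c\<^sub>\<eta>\<close>\<close>

lemma poly_ext:
  fixes p q :: "'a::{idom, ring_char_0} poly"
  assumes "\<And>x. poly p x = poly q x"
  shows "p = q"
  using assms poly_eq_poly_eq_iff by blast

lemma poly_Mact [simp]: "poly (Mact \<alpha> \<beta> l p) x = poly p (x + l) * (x + \<alpha> * l + \<beta>)"
  by (simp add: Mact_def poly_pcompose algebra_simps)

lemma Mact_add: "Mact \<alpha> \<beta> l (p + q) = Mact \<alpha> \<beta> l p + Mact \<alpha> \<beta> l q"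
  by (simp add: Mact_def pcompose_add algebra_simps)

lemma Mact_smult: "Mact \<alpha> \<beta> l (smult c p) = smult c (Mact \<alpha> \<beta> l p)"
  by (rule poly_ext) simp

lemma Mact_0 [simp]: "Mact \<alpha> \<beta> l 0 = 0"
  by (simp add: Mact_def)

lemma Mact_pCons_0:
  "Mact \<alpha> \<beta> l (pCons 0 p) = pCons 0 (Mact \<alpha> \<beta> l p) + smult l (Mact \<alpha> \<beta> l p)"
  by (rule poly_ext) (simp add: algebra_simps)

lemma Mact_bracket:
  "Mact \<alpha> \<beta> l (Mact \<alpha> \<beta> m p) - Mact \<alpha> \<beta> m (Mact \<alpha> \<beta> l p) = smult (l - m) (Mact \<alpha> \<beta> (l + m) p)"
  by (rule poly_ext) (simp add: algebra_simps)

lemma sum_atMost_pad: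
  assumes "n \<le> m"
  shows "(\<Sum>i\<le>n. smult (l ^ i) (c i)) = (\<Sum>i\<le>m. smult (l ^ i) (if i \<le> n then c i else 0))"
proof -
  have "(\<Sum>i\<le>m. smult (l ^ i) (if i \<le> n then c i else 0))
      = (\<Sum>i\<le>m. if i \<le> n then smult (l ^ i) (c i) else 0)"
    by (rule sum.cong) auto
  also have "\<dots> = (\<Sum>i\<in>{i\<in>{..m}. i \<le> n}. smult (l ^ i) (c i))"
    by (rule sum.inter_filter[symmetric]) simp
  also have "{i\<in>{..m}. i \<le> n} = {..n}" using assms by auto
  finally show ?thesis by simp
qed

lemma smult_sum_right: "smult c (\<Sum>i\<in>S. f i) = (\<Sum>i\<in>S. smult c (f i))"
  by (induct S rule: infinite_finite_induct) (simp_all add: smult_add_right)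

lemma is_polyfun_const: "is_polyfun smult (\<lambda>l. q)"
  unfolding is_polyfun_def by (intro exI[of _ 0] exI[of _ "\<lambda>i. q"]) simp

lemma is_polyfun_add:
  assumes "is_polyfun smult F" "is_polyfun smult G"
  shows "is_polyfun smult (\<lambda>l. F l + G l)"
proof -
  obtain n1 c1 where F: "\<And>l. F l = (\<Sum>i\<le>n1. smult (l ^ i) (c1 i))"
    using assms(1) unfolding is_polyfun_def by blast
  obtain n2 c2 where G: "\<And>l. G l = (\<Sum>i\<le>n2. smult (l ^ i) (c2 i))"
    using assms(2) unfolding is_polyfun_def by blast
  define c where "c i = (if i \<le> n1 then c1 i else 0) + (if i \<le> n2 then c2 i else 0)" for i
  have "F l + G l = (\<Sum>i\<le>n1 + n2. smult (l ^ i) (c i))" for l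
    by (simp add: c_def smult_add_right sum.distrib F G
        sum_atMost_pad[of n1 "n1 + n2" l c1] sum_atMost_pad[of n2 "n1 + n2" l c2])
  then show ?thesis unfolding is_polyfun_def by blast
qed

lemma is_polyfun_smult_var:
  assumes "is_polyfun smult F"
  shows "is_polyfun smult (\<lambda>l. smult l (F l))"
proof -
  obtain n c where F: "\<And>l. F l = (\<Sum>i\<le>n. smult (l ^ i) (c i))"
    using assms unfolding is_polyfun_def by blast
  have "smult l (F l) = (\<Sum>i\<le>Suc n. smult (l ^ i) (case i of 0 \<Rightarrow> 0 | Suc j \<Rightarrow> c j))" for l
    unfolding F sum.atMost_Suc_shift by (simp add: smult_sum_right)
  then show ?thesis unfolding is_polyfun_def by blast
qed

lemma is_polyfun_mult:
  assumes "is_polyfun smult F"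
  shows "is_polyfun smult (\<lambda>l. q * F l)"
proof -
  obtain n c where F: "\<And>l. F l = (\<Sum>i\<le>n. smult (l ^ i) (c i))"
    using assms unfolding is_polyfun_def by blast
  have "q * F l = (\<Sum>i\<le>n. smult (l ^ i) (q * c i))" for l
    unfolding F by (simp add: sum_distrib_left mult_smult_right)
  then show ?thesis unfolding is_polyfun_def by (intro exI[of _ n] exI[of _ "\<lambda>i. q * c i"]) simp
qed

lemma is_polyfun_smult:
  assumes "is_polyfun smult F"
  shows "is_polyfun smult (\<lambda>l. smult z (F l))"
  using is_polyfun_mult[OF assms, of "[:z:]"] by simp

lemma is_polyfun_pcompose_shift: "is_polyfun smult (\<lambda>l. pcompose f [:l, 1:])"
proof (induct f)
  case 0
  then show ?case using is_polyfun_const[of 0] by simp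
next
  case (pCons a f)
  have "pcompose (pCons a f) [:l, 1:]
      = [:a:] + ([:0, 1:] * pcompose f [:l, 1:] + smult l (pcompose f [:l, 1:]))" for l
    by (simp add: pcompose_pCons)
  then show ?case
    by (simp only:) (intro is_polyfun_add is_polyfun_const is_polyfun_mult is_polyfun_smult_var pCons(2))
qed

lemma is_polyfun_Mact: "is_polyfun smult (\<lambda>l. Mact \<alpha> \<beta> l p)"
proof -
  have "Mact \<alpha> \<beta> l p = [:\<beta>, 1:] * pcompose p [:l, 1:] + smult \<alpha> (smult l (pcompose p [:l, 1:]))" for l
    by (simp add: Mact_def algebra_simps smult_add_left)
  then show ?thesis
    by (simp only:) (intro is_polyfun_add is_polyfun_mult is_polyfun_smult is_polyfun_smult_var
        is_polyfun_pcompose_shift)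
qed

lemma is_polyfun_pair:
  assumes "is_polyfun smult F"
  shows "is_polyfun (\<lambda>c (x, z). (smult c x, c * z)) (\<lambda>l. (F l, 0::complex))"
proof -
  obtain n c where F: "\<And>l. F l = (\<Sum>i\<le>n. smult (l ^ i) (c i))"
    using assms unfolding is_polyfun_def by blast
  have "(F l, 0::complex) = (\<Sum>i\<le>n. (\<lambda>c (x, z). (smult c x, c * z)) (l ^ i) (c i, 0))" for l
    by (simp add: prod_eq_iff fst_sum snd_sum F)
  then show ?thesis unfolding is_polyfun_def by (intro exI[of _ n] exI[of _ "\<lambda>i. (c i, 0)"]) simp
qed

lemma vector_space_smult: "vector_space (smult :: complex \<Rightarrow> complex poly \<Rightarrow> complex poly)"
  by unfold_locales (simp_all add: smult_add_right smult_add_left)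

lemma vector_space_mult: "vector_space ((*) :: complex \<Rightarrow> complex \<Rightarrow> complex)"
  by unfold_locales (simp_all add: algebra_simps)

lemma vector_space_pair:
  "vector_space ((\<lambda>c (x, z). (smult c x, c * z)) :: complex \<Rightarrow> complex poly \<times> complex \<Rightarrow> _)"
  by unfold_locales (auto simp: smult_add_right smult_add_left algebra_simps)

lemma Mab_is_Wmod: "is_Wmod a b (Mab \<alpha> \<beta>)"
  unfolding is_Wmod_def lin_def Mab_def
  by (simp add: vector_space_smult Mact_add Mact_smult is_polyfun_Mact is_polyfun_const
      Mact_pCons_0 Mact_bracket algebra_simps)

lemma Cc_is_Wmod: "is_Wmod a b (Cc \<eta>)"
proof -
  have "\<exists>n c. \<forall>l. (\<Sum>i\<le>n. c i * l ^ i) = (0::complex)"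
    by (intro exI[of _ 0] exI[of _ "\<lambda>_. 0"]) simp
  then show ?thesis
    by (simp add: is_Wmod_def lin_def Cc_def vector_space_mult algebra_simps is_polyfun_def)
qed

section \<open>Extensions given by shift cocycles\<close>

lemma Ecoc_scl [simp]: "scl (Ecoc \<alpha> \<beta> \<eta> (f, g, h)) c (x, z) = (smult c x, c * z)"
  and Ecoc_dd [simp]: "dd (Ecoc \<alpha> \<beta> \<eta> (f, g, h)) (x, z) = (pCons 0 x + smult z f, \<eta> * z)"
  and Ecoc_actL [simp]: "actL (Ecoc \<alpha> \<beta> \<eta> (f, g, h)) l (x, z) = (Mact \<alpha> \<beta> l x + smult z (g l), 0)"
  and Ecoc_actW [simp]: "actW (Ecoc \<alpha> \<beta> \<eta> (f, g, h)) l (x, z) = (smult z (h l), 0)"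
  by (simp_all add: Ecoc_def)

definition shift_cocycle :: "complex poly \<Rightarrow> cocyc" where
  "shift_cocycle f = (f, \<lambda>l. pcompose f [:l, 1:], \<lambda>l. 0)"

lemma shift_cocycle_dd_condition:
  "Mact 1 \<beta> l (pCons 0 x + smult z f) + smult (- \<beta> * z) (pcompose f [:l, 1:])
   = pCons 0 (Mact 1 \<beta> l x + smult z (pcompose f [:l, 1:]))
     + smult l (Mact 1 \<beta> l x + smult z (pcompose f [:l, 1:]))"
  by (rule poly_ext) (simp add: poly_pcompose algebra_simps)

lemma shift_cocycle_bracket_condition:
  "Mact 1 \<beta> l (Mact 1 \<beta> m x + smult z (pcompose f [:m, 1:]))
   - Mact 1 \<beta> m (Mact 1 \<beta> l x + smult z (pcompose f [:l, 1:]))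
   = smult (l - m) (Mact 1 \<beta> (l + m) x + smult z (pcompose f [:l + m, 1:]))"
  by (rule poly_ext) (simp add: poly_pcompose algebra_simps)

lemma Ecoc_shift_is_Wmod: "is_Wmod a b (Ecoc 1 \<beta> (- \<beta>) (shift_cocycle f))"
  unfolding is_Wmod_def lin_def shift_cocycle_def
proof (intro conjI allI)
  show "vector_space (scl (Ecoc 1 \<beta> (- \<beta>) (f, \<lambda>l. pcompose f [:l, 1:], \<lambda>l. 0)))"
    by (simp add: Ecoc_def vector_space_pair)
  fix v w :: "complex poly \<times> complex" and l m c :: complex
  let ?E = "Ecoc 1 \<beta> (- \<beta>) (f, \<lambda>l. pcompose f [:l, 1:], \<lambda>l. 0)"
  obtain x z y u where v: "v = (x, z)" and w: "w = (y, u)" by fastforce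
  show "dd ?E (v + w) = dd ?E v + dd ?E w"
    by (simp add: v w algebra_simps smult_add_left)
  show "dd ?E (scl ?E c v) = scl ?E c (dd ?E v)"
    by (simp add: v smult_add_right)
  show "actL ?E l (v + w) = actL ?E l v + actL ?E l w"
    by (simp add: v w Mact_add smult_add_left)
  show "actL ?E l (scl ?E c v) = scl ?E c (actL ?E l v)"
    by (simp add: v Mact_smult smult_add_right)
  show "actW ?E l (v + w) = actW ?E l v + actW ?E l w"
    by (simp add: v w)
  show "actW ?E l (scl ?E c v) = scl ?E c (actW ?E l v)"
    by (simp add: v)
  have "is_polyfun (\<lambda>c (x, z). (smult c x, c * z))
          (\<lambda>l. (Mact 1 \<beta> l x + smult z (pcompose f [:l, 1:]), 0::complex))"
    by (intro is_polyfun_pair is_polyfun_add is_polyfun_Mact is_polyfun_smult is_polyfun_pcompose_shift)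
  then show "is_polyfun (scl ?E) (\<lambda>l. actL ?E l v)"
    by (simp add: v Ecoc_def)
  show "is_polyfun (scl ?E) (\<lambda>l. actW ?E l v)"
    using is_polyfun_pair[OF is_polyfun_const[of 0]] by (simp add: v Ecoc_def zero_prod_def)
  show "actL ?E l (dd ?E v) = dd ?E (actL ?E l v) + scl ?E l (actL ?E l v)"
    using shift_cocycle_dd_condition[of \<beta> l x z f] by (simp add: v)
  show "actW ?E l (dd ?E v) = dd ?E (actW ?E l v) + scl ?E l (actW ?E l v)"
    by (simp add: v zero_prod_def)
  show "actL ?E l (actL ?E m v) - actL ?E m (actL ?E l v) = scl ?E (l - m) (actL ?E (l + m) v)"
    using shift_cocycle_bracket_condition[of \<beta> l m x z f] by (simp add: v)
  show "actL ?E l (actW ?E m v) - actW ?E m (actL ?E l v)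
        = scl ?E (- (l + m) + a * l + b) (actW ?E (l + m) v)"
    by (simp add: v zero_prod_def)
  show "actW ?E l (actW ?E m v) - actW ?E m (actW ?E l v) = 0"
    by (simp add: v)
qed

lemma Ecoc_shift_is_ext: "is_ext a b (Mab 1 \<beta>) (Cc (- \<beta>)) (Ecoc 1 \<beta> (- \<beta>) (shift_cocycle f)) incl snd"
  unfolding is_ext_def
proof (intro conjI Mab_is_Wmod Cc_is_Wmod Ecoc_shift_is_Wmod)
  show "is_hom (Mab 1 \<beta>) (Ecoc 1 \<beta> (- \<beta>) (shift_cocycle f)) incl"
    by (simp add: is_hom_def lin_def incl_def Mab_def shift_cocycle_def zero_prod_def)
  show "is_hom (Ecoc 1 \<beta> (- \<beta>) (shift_cocycle f)) (Cc (- \<beta>)) snd"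
    by (auto simp: is_hom_def lin_def Cc_def shift_cocycle_def)
  show "inj incl" by (simp add: inj_def incl_def)
  show "surj snd" by (metis snd_conv surjI)
  show "range incl = {x. snd x = 0}"
    by (auto simp: incl_def image_def intro: prod_eqI)
qed

section \<open>The cocycle of an arbitrary extension\<close>

locale Cc_extension =
  fixes a b \<alpha> \<beta> \<eta> :: complex and E :: "('e::ab_group_add) cmod"
    and i :: "complex poly \<Rightarrow> 'e" and p :: "'e \<Rightarrow> complex" and c :: 'e
  assumes ext: "is_ext a b (Mab \<alpha> \<beta>) (Cc \<eta>) E i p" and p_c: "p c = 1"
begin

sublocale vector_space "scl E"
  using ext by (simp add: is_ext_def is_Wmod_def)

lemma i_add: "i (x + y) = i x + i y"
  and i_smult: "i (smult c' x) = scl E c' (i x)"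
  and i_dd: "i (pCons 0 x) = dd E (i x)"
  and i_actL: "actL E l (i x) = i (Mact \<alpha> \<beta> l x)"
  and i_actW: "actW E l (i x) = i 0"
  using ext by (auto simp: is_ext_def is_hom_def lin_def Mab_def)

lemma p_add: "p (e + e') = p e + p e'"
  and p_scl: "p (scl E c' e) = c' * p e"
  and p_dd: "p (dd E e) = \<eta> * p e"
  and p_actL: "p (actL E l e) = 0"
  and p_actW: "p (actW E l e) = 0"
  using ext by (auto simp: is_ext_def is_hom_def lin_def Cc_def)

lemma E_dd_add: "dd E (e + e') = dd E e + dd E e'"
  and E_dd_scl: "dd E (scl E c' e) = scl E c' (dd E e)"
  and E_actL_add: "actL E l (e + e') = actL E l e + actL E l e'"
  and E_actL_scl: "actL E l (scl E c' e) = scl E c' (actL E l e)"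
  and E_actW_add: "actW E l (e + e') = actW E l e + actW E l e'"
  and E_actW_scl: "actW E l (scl E c' e) = scl E c' (actW E l e)"
  and E_actL_dd: "actL E l (dd E e) = dd E (actL E l e) + scl E l (actL E l e)"
  and E_actW_dd: "actW E l (dd E e) = dd E (actW E l e) + scl E l (actW E l e)"
  using ext unfolding is_ext_def is_Wmod_def lin_def by auto

sublocale i: additive i by standard (rule i_add)
sublocale p: additive p by standard (rule p_add)

lemma i_inj: "i x = i y \<Longrightarrow> x = y"
  using ext by (auto simp: is_ext_def dest: injD)

lemma p_i [simp]: "p (i x) = 0"
  using ext unfolding is_ext_def by blast

lemma i_inv_into: "p e = 0 \<Longrightarrow> i (inv i e) = e"
  using ext unfolding is_ext_def by (metis (mono_tags, lifting) f_inv_into_f mem_Collect_eq)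

text \<open>The data \<open>(f, g, h)\<close> of \<open>Ecoc\<close> read off from \<open>E\<close> relative to the lift \<open>c\<close>.\<close>

definition f_coc :: "complex poly" where "f_coc = inv i (dd E c - scl E \<eta> c)"
definition g_coc :: "complex \<Rightarrow> complex poly" where "g_coc l = inv i (actL E l c)"
definition h_coc :: "complex \<Rightarrow> complex poly" where "h_coc l = inv i (actW E l c)"

lemma i_f_coc: "i f_coc = dd E c - scl E \<eta> c"
  unfolding f_coc_def by (rule i_inv_into) (simp add: p.diff p_dd p_scl)

lemma i_g_coc: "i (g_coc l) = actL E l c"
  unfolding g_coc_def by (rule i_inv_into) (simp add: p_actL)

lemma i_h_coc: "i (h_coc l) = actW E l c"
  unfolding h_coc_def by (rule i_inv_into) (simp add: p_actW)

definition elem :: "complex poly \<Rightarrow> complex \<Rightarrow> 'e" where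
  "elem x s = i x + scl E s c"

lemma p_elem [simp]: "p (elem x s) = s"
  by (simp add: elem_def p_add p_scl p_c)

definition vpart :: "'e \<Rightarrow> complex poly" where
  "vpart e = inv i (e - scl E (p e) c)"

lemma elem_vpart: "elem (vpart e) (p e) = e"
  by (simp add: elem_def vpart_def i_inv_into p.diff p_scl p_c)

lemma elem_cases: obtains x s where "e = elem x s"
  using elem_vpart by metis

lemma elem_eq_iff [simp]: "elem x s = elem y t \<longleftrightarrow> x = y \<and> s = t"
proof
  assume eq: "elem x s = elem y t"
  then have "s = t" by (metis p_elem)
  with eq have "i x = i y" by (simp add: elem_def)
  with \<open>s = t\<close> show "x = y \<and> s = t"
    by (simp add: i_inj)
qed simp

lemma vpart_elem [simp]: "vpart (elem x s) = x"
  using elem_vpart[of "elem x s"] by simp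

lemma i_eq_elem: "i x = elem x 0"
  by (simp add: elem_def)

lemma elem_add: "elem x s + elem y t = elem (x + y) (s + t)"
  by (simp add: elem_def i_add scale_left_distrib algebra_simps)

lemma elem_scl: "scl E r (elem x s) = elem (smult r x) (r * s)"
  by (simp add: elem_def i_smult scale_right_distrib)

lemma elem_dd: "dd E (elem x s) = elem (pCons 0 x + smult s f_coc) (\<eta> * s)"
proof -
  have "dd E c = i f_coc + scl E \<eta> c" by (simp add: i_f_coc)
  then show ?thesis
    by (simp add: elem_def E_dd_add E_dd_scl i_dd[symmetric] i_add i_smult
        scale_right_distrib mult.commute add.assoc)
qed

lemma elem_actL: "actL E l (elem x s) = elem (Mact \<alpha> \<beta> l x + smult s (g_coc l)) 0"
  by (simp add: elem_def E_actL_add E_actL_scl i_actL i_g_coc[symmetric] i_add i_smult)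

lemma elem_actW: "actW E l (elem x s) = elem (smult s (h_coc l)) 0"
  by (simp add: elem_def E_actW_add E_actW_scl i_actW i.zero i_h_coc[symmetric] i_smult)

lemma f_coc_eqI: "dd E c = i x + scl E \<eta> c \<Longrightarrow> f_coc = x"
  using i_f_coc by (simp add: i_inj)

lemma g_coc_eqI: "actL E l c = i y \<Longrightarrow> g_coc l = y"
  using i_g_coc by (metis i_inj)

lemma h_coc_eqI: "actW E l c = i y \<Longrightarrow> h_coc l = y"
  using i_h_coc by (metis i_inj)

text \<open>Not to be oriented as \<open>c = elem 0 1\<close>: \<open>elem\<close> depends on \<open>c\<close>, so that rule loops.\<close>

lemma elem_0_1: "elem 0 1 = c"
  by (simp add: elem_def i.zero)

lemma cocycle_dd_conditions:
  "smult \<eta> (h_coc l) = pCons 0 (h_coc l) + smult l (h_coc l)"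
  "Mact \<alpha> \<beta> l f_coc + smult \<eta> (g_coc l) = pCons 0 (g_coc l) + smult l (g_coc l)"
proof -
  have dd_c: "dd E c = elem f_coc \<eta>"
    using elem_dd[of 0 1] by (simp add: elem_0_1)
  have "actW E l (dd E c) = dd E (actW E l c) + scl E l (actW E l c)"
    by (rule E_actW_dd)
  then show "smult \<eta> (h_coc l) = pCons 0 (h_coc l) + smult l (h_coc l)"
    by (simp add: dd_c elem_actW i_h_coc[symmetric] i_eq_elem elem_dd elem_scl elem_add)
  have "actL E l (dd E c) = dd E (actL E l c) + scl E l (actL E l c)"
    by (rule E_actL_dd)
  then show "Mact \<alpha> \<beta> l f_coc + smult \<eta> (g_coc l) = pCons 0 (g_coc l) + smult l (g_coc l)"
    by (simp add: dd_c elem_actL i_g_coc[symmetric] i_eq_elem elem_dd elem_scl elem_add)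
qed

lemma h_coc_zero: "h_coc l = 0"
proof -
  have "h_coc l * [:l - \<eta>, 1:] = (pCons 0 (h_coc l) + smult l (h_coc l)) - smult \<eta> (h_coc l)"
    by (rule poly_ext) (simp add: algebra_simps)
  also have "\<dots> = 0"
    by (simp add: cocycle_dd_conditions(1)[symmetric])
  finally have "h_coc l = 0 \<or> [:l - \<eta>, 1:] = 0"
    by (simp only: mult_eq_0_iff)
  then show ?thesis by simp
qed

lemma g_coc_mult: "g_coc l * [:l - \<eta>, 1:] = Mact \<alpha> \<beta> l f_coc"
proof -
  have "g_coc l * [:l - \<eta>, 1:] = (pCons 0 (g_coc l) + smult l (g_coc l)) - smult \<eta> (g_coc l)"
    by (rule poly_ext) (simp add: algebra_simps)
  then show ?thesis
    by (simp add: cocycle_dd_conditions(2)[symmetric])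
qed

lemma poly_f_coc_eta: "poly f_coc \<eta> * (\<alpha> * l + \<beta> + \<eta> - l) = 0"
proof -
  have "poly (Mact \<alpha> \<beta> l f_coc) (\<eta> - l) = 0"
    by (simp flip: g_coc_mult add: algebra_simps)
  then show ?thesis by (simp add: algebra_simps)
qed

lemma g_coc_shift:
  assumes "\<alpha> = 1" and "\<eta> = - \<beta>"
  shows "g_coc l = pcompose f_coc [:l, 1:]"
proof -
  have "g_coc l * [:l - \<eta>, 1:] = pcompose f_coc [:l, 1:] * [:l - \<eta>, 1:]"
    unfolding g_coc_mult using assms by (simp add: Mact_def)
  then have "[:l - \<eta>, 1:] = 0 \<or> g_coc l = pcompose f_coc [:l, 1:]"
    by (simp only: mult_cancel_right)
  then show ?thesis by simp
qed

lemma nontrivial_conditions: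
  assumes "poly f_coc \<eta> \<noteq> 0"
  shows "\<beta> + \<eta> = 0 \<and> \<alpha> = 1"
proof -
  have "\<beta> + \<eta> = 0" "\<alpha> + \<beta> + \<eta> - 1 = 0"
    using poly_f_coc_eta[of 0] poly_f_coc_eta[of 1] assms by simp_all
  then show ?thesis by (simp add: algebra_simps)
qed

lemma trivial_imp_root:
  assumes "trivial_ext (Mab \<alpha> \<beta>) (Cc \<eta>) E i p"
  shows "poly f_coc \<eta> = 0"
proof -
  let ?D = "dsum (Mab \<alpha> \<beta>) (Cc \<eta>)"
  obtain \<phi> where hom: "is_hom E ?D \<phi>" and \<phi>_i: "\<phi> \<circ> i = (\<lambda>v. (v, 0))" and snd_\<phi>: "snd \<circ> \<phi> = p"
    using assms unfolding trivial_ext_def ext_equiv_def by blast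
  obtain u where \<phi>_c: "\<phi> c = (u, 1)"
    using snd_\<phi> p_c by (metis comp_apply prod.collapse)
  have "\<phi> (dd E c) = (pCons 0 u, \<eta>)"
    using hom \<phi>_c by (simp add: is_hom_def dsum_def Mab_def Cc_def)
  moreover have "dd E c = i f_coc + scl E \<eta> c"
    by (simp add: i_f_coc)
  then have "\<phi> (dd E c) = (f_coc + smult \<eta> u, \<eta>)"
    using hom \<phi>_c \<phi>_i by (simp add: is_hom_def lin_def dsum_def Mab_def Cc_def fun_eq_iff)
  ultimately have "f_coc = pCons 0 u - smult \<eta> u"
    by (simp add: eq_diff_eq)
  then show ?thesis by simp
qed

lemma g_coc_eq_Mact:
  assumes "f_coc = [:- \<eta>, 1:] * u"
  shows "g_coc l = Mact \<alpha> \<beta> l u"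
proof -
  have "g_coc l * [:l - \<eta>, 1:] = Mact \<alpha> \<beta> l u * [:l - \<eta>, 1:]"
    unfolding g_coc_mult assms by (rule poly_ext) (simp add: algebra_simps)
  then have "[:l - \<eta>, 1:] = 0 \<or> g_coc l = Mact \<alpha> \<beta> l u"
    by (simp only: mult_cancel_right)
  then show ?thesis by simp
qed

text \<open>With \<open>f = (\<partial> - \<eta>)u\<close>, the splitting sends \<open>c\<close> to \<open>u + c\<^sub>\<eta>\<close>.\<close>

lemma root_imp_trivial:
  assumes "poly f_coc \<eta> = 0"
  shows "trivial_ext (Mab \<alpha> \<beta>) (Cc \<eta>) E i p"
proof -
  let ?D = "dsum (Mab \<alpha> \<beta>) (Cc \<eta>)"
  define u where "u = synthetic_div f_coc \<eta>"
  have f_coc: "f_coc = [:- \<eta>, 1:] * u"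
    using synthetic_div_correct'[of \<eta> f_coc] assms by (simp add: u_def)
  define \<phi> where "\<phi> e = (vpart e + smult (p e) u, p e)" for e
  have \<phi>_elem: "\<phi> (elem x s) = (x + smult s u, s)" for x s
    by (simp add: \<phi>_def)
  have "is_hom E ?D \<phi>"
    unfolding is_hom_def lin_def
  proof (intro conjI allI)
    fix e e' :: 'e and r l :: complex
    obtain x s y t where e: "e = elem x s" and e': "e' = elem y t"
      by (meson elem_cases)
    show "\<phi> (e + e') = \<phi> e + \<phi> e'"
      by (simp add: e e' elem_add \<phi>_elem smult_add_left)
    show "\<phi> (scl E r e) = scl ?D r (\<phi> e)"
      by (simp add: e elem_scl \<phi>_elem dsum_def Mab_def Cc_def smult_add_right)
    have "pCons 0 x + smult s f_coc + smult (\<eta> * s) u = pCons 0 (x + smult s u)"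
      unfolding f_coc by (rule poly_ext) (simp add: algebra_simps)
    then show "\<phi> (dd E e) = dd ?D (\<phi> e)"
      by (simp add: e elem_dd \<phi>_elem dsum_def Mab_def Cc_def)
    show "\<phi> (actL E l e) = actL ?D l (\<phi> e)"
      by (simp add: e elem_actL \<phi>_elem dsum_def Mab_def Cc_def g_coc_eq_Mact[OF f_coc]
          Mact_add Mact_smult)
    show "\<phi> (actW E l e) = actW ?D l (\<phi> e)"
      by (simp add: e elem_actW \<phi>_elem dsum_def Mab_def Cc_def h_coc_zero)
  qed
  moreover have "\<phi> \<circ> i = (\<lambda>v. (v, 0))"
    by (simp add: fun_eq_iff i_eq_elem \<phi>_elem)
  moreover have "snd \<circ> \<phi> = p"
    by (simp add: fun_eq_iff \<phi>_def)
  ultimately show ?thesis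
    unfolding trivial_ext_def ext_equiv_def by blast
qed

lemma trivial_iff_root: "trivial_ext (Mab \<alpha> \<beta>) (Cc \<eta>) E i p \<longleftrightarrow> poly f_coc \<eta> = 0"
  using trivial_imp_root root_imp_trivial by blast

lemma equiv_Ek:
  assumes \<alpha>: "\<alpha> = 1" and \<eta>: "\<eta> = - \<beta>"
  shows "ext_equiv (Ek \<alpha> \<beta> \<eta> (poly f_coc \<eta>)) incl snd E i p"
proof -
  define k where "k = poly f_coc \<eta>"
  let ?Ek = "Ek \<alpha> \<beta> \<eta> k"
  define u where "u = synthetic_div f_coc \<eta>"
  have f_coc: "f_coc = [:k:] + [:- \<eta>, 1:] * u"
    unfolding k_def u_def by (metis add.commute synthetic_div_correct')
  define \<psi> where "\<psi> v = elem (fst v - smult (snd v) u) (snd v)" for v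
  have \<psi>_pair: "\<psi> (x, z) = elem (x - smult z u) z" for x z
    by (simp add: \<psi>_def)
  have "is_hom ?Ek E \<psi>"
    unfolding is_hom_def lin_def
  proof (intro conjI allI)
    fix v w :: "complex poly \<times> complex" and r l :: complex
    obtain x z y t where v: "v = (x, z)" and w: "w = (y, t)" by fastforce
    show "\<psi> (v + w) = \<psi> v + \<psi> w"
      by (simp add: v w \<psi>_pair elem_add algebra_simps smult_add_left)
    show "\<psi> (scl ?Ek r v) = scl E r (\<psi> v)"
      by (simp add: v \<psi>_pair elem_scl Ek_def smult_diff_right)
    have "pCons 0 x + smult z [:k:] - smult (\<eta> * z) u = pCons 0 (x - smult z u) + smult z f_coc"
      unfolding f_coc by (rule poly_ext) (simp add: algebra_simps)
    then show "\<psi> (dd ?Ek v) = dd E (\<psi> v)"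
      by (simp add: v \<psi>_pair elem_dd Ek_def)
    have "Mact \<alpha> \<beta> l x + smult z [:k:] = Mact \<alpha> \<beta> l (x - smult z u) + smult z (g_coc l)"
      unfolding g_coc_shift[OF \<alpha> \<eta>] f_coc
      by (rule poly_ext) (simp add: \<alpha> \<eta> poly_pcompose algebra_simps)
    then show "\<psi> (actL ?Ek l v) = actL E l (\<psi> v)"
      by (simp add: v \<psi>_pair elem_actL Ek_def)
    show "\<psi> (actW ?Ek l v) = actW E l (\<psi> v)"
      by (simp add: v \<psi>_pair elem_actW h_coc_zero Ek_def)
  qed
  moreover have "\<psi> \<circ> incl = i"
    by (simp add: fun_eq_iff incl_def \<psi>_pair i_eq_elem)
  moreover have "p \<circ> \<psi> = snd"
    by (simp add: fun_eq_iff \<psi>_def)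
  ultimately show ?thesis
    unfolding ext_equiv_def k_def by blast
qed

end

section \<open>Cocycles and coboundaries\<close>

lemma Ek_eq_shift: "Ek \<alpha> \<beta> \<eta> k = Ecoc \<alpha> \<beta> \<eta> (shift_cocycle [:k:])"
  by (simp add: Ek_def shift_cocycle_def)

lemma Ek_is_ext: "is_ext a b (Mab 1 \<beta>) (Cc (- \<beta>)) (Ek 1 \<beta> (- \<beta>) k) incl snd"
  unfolding Ek_eq_shift by (rule Ecoc_shift_is_ext)

lemma Cc_extension_Ecoc:
  "is_ext a b (Mab \<alpha> \<beta>) (Cc \<eta>) (Ecoc \<alpha> \<beta> \<eta> t) incl snd
   \<Longrightarrow> Cc_extension a b \<alpha> \<beta> \<eta> (Ecoc \<alpha> \<beta> \<eta> t) incl snd (0, 1)"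
  by unfold_locales simp_all

lemma cocycle_is_shift:
  assumes "(f, g, h) \<in> cocycles a b 1 \<beta> (- \<beta>)"
  shows "(f, g, h) = shift_cocycle f"
proof -
  interpret Cc_extension a b 1 \<beta> "- \<beta>" "Ecoc 1 \<beta> (- \<beta>) (f, g, h)" incl snd "(0, 1)"
    using assms by (intro Cc_extension_Ecoc) (simp add: cocycles_def)
  have "f_coc = f" "g_coc l = g l" "h_coc l = h l" for l
    by (intro f_coc_eqI g_coc_eqI h_coc_eqI; simp add: incl_def)+
  then show ?thesis
    using h_coc_zero g_coc_shift by (simp add: shift_cocycle_def fun_eq_iff)
qed

lemma trivial_shift_iff:
  "trivial_ext (Mab 1 \<beta>) (Cc (- \<beta>)) (Ecoc 1 \<beta> (- \<beta>) (shift_cocycle f)) incl snd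
   \<longleftrightarrow> poly f (- \<beta>) = 0"
proof -
  interpret Cc_extension a b 1 \<beta> "- \<beta>" "Ecoc 1 \<beta> (- \<beta>) (shift_cocycle f)" incl snd "(0, 1)"
    by (intro Cc_extension_Ecoc Ecoc_shift_is_ext)
  have "f_coc = f"
    by (rule f_coc_eqI) (simp add: incl_def shift_cocycle_def)
  then show ?thesis using trivial_iff_root by simp
qed

lemma cocycles_eq: "cocycles a b 1 \<beta> (- \<beta>) = range shift_cocycle"
  using cocycle_is_shift Ecoc_shift_is_ext by (fastforce simp: cocycles_def)

lemma coboundaries_eq: "coboundaries a b 1 \<beta> (- \<beta>) = shift_cocycle ` {f. poly f (- \<beta>) = 0}"
  using trivial_shift_iff by (auto simp: coboundaries_def cocycles_eq)

lemma shift_cocycle_0: "shift_cocycle 0 = (0, \<lambda>l. 0, \<lambda>l. 0)"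
  by (simp add: shift_cocycle_def)

lemma cadd_shift_cocycle: "cadd (shift_cocycle f) (shift_cocycle g) = shift_cocycle (f + g)"
  by (simp add: shift_cocycle_def cadd_def pcompose_add)

lemma cscale_shift_cocycle: "cscale r (shift_cocycle f) = shift_cocycle (smult r f)"
  by (simp add: shift_cocycle_def cscale_def pcompose_smult)

lemma shift_cocycle_inj: "shift_cocycle f = shift_cocycle g \<longleftrightarrow> f = g"
  by (auto simp: shift_cocycle_def)

lemma csubspace_shift_cocycle_image:
  assumes "0 \<in> S" and "\<And>f g. f \<in> S \<Longrightarrow> g \<in> S \<Longrightarrow> f + g \<in> S"
    and "\<And>r f. f \<in> S \<Longrightarrow> smult r f \<in> S"
  shows "csubspace (shift_cocycle ` S)"
  using assms by (force simp: csubspace_def cadd_shift_cocycle cscale_shift_cocycle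
      shift_cocycle_0[symmetric])

lemma quot_dim_one_cocycles:
  "quot_dim_one (cocycles a b 1 \<beta> (- \<beta>)) (coboundaries a b 1 \<beta> (- \<beta>))"
  unfolding quot_dim_one_def cocycles_eq coboundaries_eq
proof (intro conjI bexI[of _ "shift_cocycle 1"] ballI)
  show "csubspace (range shift_cocycle)"
    by (rule csubspace_shift_cocycle_image) simp_all
  show "csubspace (shift_cocycle ` {f. poly f (- \<beta>) = 0})"
    by (rule csubspace_shift_cocycle_image) simp_all
  show "shift_cocycle 1 \<notin> shift_cocycle ` {f. poly f (- \<beta>) = 0}"
    by (auto simp: shift_cocycle_inj)
  fix t assume "t \<in> range shift_cocycle"
  then obtain f where "t = shift_cocycle f" by blast
  then have "cadd t (cscale (- poly f (- \<beta>)) (shift_cocycle 1)) \<in> shift_cocycle ` {f. poly f (- \<beta>) = 0}"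
    by (auto simp: cadd_shift_cocycle cscale_shift_cocycle)
  then show "\<exists>r. cadd t (cscale (- r) (shift_cocycle 1)) \<in> shift_cocycle ` {f. poly f (- \<beta>) = 0}"
    by blast
qed auto

lemma Ek_nontrivial:
  assumes "k \<noteq> 0"
  shows "nontrivial_ext a b (Mab 1 \<beta>) (Cc (- \<beta>)) (Ek 1 \<beta> (- \<beta>) k) incl snd"
  using assms Ek_is_ext trivial_shift_iff by (simp add: nontrivial_ext_def Ek_eq_shift)

lemma nontrivial_ext_lift:
  assumes "nontrivial_ext a b (Mab \<alpha> \<beta>) (Cc \<eta>) E i p"
  obtains c where "Cc_extension a b \<alpha> \<beta> \<eta> E i p c"
    and "poly (Cc_extension.f_coc \<eta> E i c) \<eta> \<noteq> 0"
proof -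
  from assms obtain c where "p c = 1"
    by (auto simp: nontrivial_ext_def is_ext_def dest: surjD[of _ 1])
  with assms show thesis
    using that Cc_extension.trivial_iff_root
    by (metis Cc_extension.intro nontrivial_ext_def)
qed

lemma nontrivial_ext_conditions:
  assumes "nontrivial_ext a b (Mab \<alpha> \<beta>) (Cc \<eta>) E i p"
  shows "\<beta> + \<eta> = 0 \<and> \<alpha> = 1"
  using nontrivial_ext_lift[OF assms] Cc_extension.nontrivial_conditions by metis

lemma nontrivial_ext_equiv_Ek:
  assumes "nontrivial_ext a b (Mab \<alpha> \<beta>) (Cc \<eta>) E i p"
  shows "\<exists>k. k \<noteq> 0 \<and> ext_equiv (Ek \<alpha> \<beta> \<eta> k) incl snd E i p"
proof -
  have \<alpha>: "\<alpha> = 1" and \<eta>: "\<eta> = - \<beta>"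
    using nontrivial_ext_conditions[OF assms] by (simp_all add: eq_neg_iff_add_eq_0 add.commute)
  show ?thesis
    using nontrivial_ext_lift[OF assms] Cc_extension.equiv_Ek[OF _ \<alpha> \<eta>] by metis
qed

theorem theorem3p5:
  fixes a b \<alpha> \<beta> \<eta> :: complex
  assumes "(a, b) \<noteq> (1, 0)" and "\<alpha> \<noteq> 0"
  shows "(\<forall>(E :: ('e::ab_group_add) cmod) i p.
            nontrivial_ext a b (Mab \<alpha> \<beta>) (Cc \<eta>) E i p \<longrightarrow> \<beta> + \<eta> = 0 \<and> \<alpha> = 1)
       \<and> (\<beta> + \<eta> = 0 \<and> \<alpha> = 1 \<longrightarrow>
            (\<exists>(E :: (complex poly \<times> complex) cmod) i p.
               nontrivial_ext a b (Mab \<alpha> \<beta>) (Cc \<eta>) E i p))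
       \<and> (\<beta> + \<eta> = 0 \<and> \<alpha> = 1 \<longrightarrow>
            quot_dim_one (cocycles a b 1 \<beta> (- \<beta>)) (coboundaries a b 1 \<beta> (- \<beta>))
          \<and> (\<forall>(E :: 'e cmod) i p. nontrivial_ext a b (Mab \<alpha> \<beta>) (Cc \<eta>) E i p \<longrightarrow>
               (\<exists>k. k \<noteq> 0 \<and> is_ext a b (Mab \<alpha> \<beta>) (Cc \<eta>) (Ek \<alpha> \<beta> \<eta> k) incl snd
                    \<and> ext_equiv (Ek \<alpha> \<beta> \<eta> k) incl snd E i p)))"
proof (intro conjI impI)
  show "\<forall>(E :: 'e cmod) i p. nontrivial_ext a b (Mab \<alpha> \<beta>) (Cc \<eta>) E i p \<longrightarrow> \<beta> + \<eta> = 0 \<and> \<alpha> = 1"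
    using nontrivial_ext_conditions by blast
next
  assume "\<beta> + \<eta> = 0 \<and> \<alpha> = 1"
  then have \<alpha>: "\<alpha> = 1" and \<eta>: "\<eta> = - \<beta>"
    by (simp_all add: eq_neg_iff_add_eq_0 add.commute)
  show "\<exists>(E :: (complex poly \<times> complex) cmod) i p. nontrivial_ext a b (Mab \<alpha> \<beta>) (Cc \<eta>) E i p"
    using Ek_nontrivial[OF one_neq_zero] unfolding \<alpha> \<eta> by blast
next
  show "quot_dim_one (cocycles a b 1 \<beta> (- \<beta>)) (coboundaries a b 1 \<beta> (- \<beta>))"
    by (rule quot_dim_one_cocycles)
next
  assume "\<beta> + \<eta> = 0 \<and> \<alpha> = 1"
  then have \<alpha>: "\<alpha> = 1" and \<eta>: "\<eta> = - \<beta>"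
    by (simp_all add: eq_neg_iff_add_eq_0 add.commute)
  show "\<forall>(E :: 'e cmod) i p. nontrivial_ext a b (Mab \<alpha> \<beta>) (Cc \<eta>) E i p \<longrightarrow>
          (\<exists>k. k \<noteq> 0 \<and> is_ext a b (Mab \<alpha> \<beta>) (Cc \<eta>) (Ek \<alpha> \<beta> \<eta> k) incl snd
               \<and> ext_equiv (Ek \<alpha> \<beta> \<eta> k) incl snd E i p)"
    using nontrivial_ext_equiv_Ek Ek_is_ext unfolding \<alpha> \<eta> by blast
qed

end
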